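(* Let $\langle X,d\rangle$ be a metric space. The following conditions are equivalent: (1) $X$ is cofinally Bourbaki quasi-complete; (2) $X$ is strongly uniformly locally bounded and, for every nowhere-vanishing real-valued strongly uniformly locally Lipschitz function $f$ on $X$, the reciprocal $1/f$ is strongly uniformly locally Lipschitz; (3) $X$ is strongly uniformly locally bounded and, for every nowhere-vanishing real-valued Lipschitz function $f$ on $X$, the reciprocal $1/f$ is strongly uniformly locally Lipschitz.
   Context: For $\varepsilon>0$, an $\varepsilon$-chain joining $x,y\in X$ is a finite sequence $x=x_0,\dots,x_n=y$ with $d(x_{i-1},x_i)<\varepsilon$. $S^\infty_d(x,\varepsilon)$ denotes the set of points of $X$ joinable to $x$ by an $\varepsilon$-chain. A sequence $\langle x_n\rangle$ is cofinally Bourbaki quasi-Cauchy if for every $\varepsilon>0$ there is an infinite $N_\varepsilon\subseteq\mathbb{N}$ such that any $x_j,x_k$ with $j,k\in N_\varepsilon$ can be joined by an $\varepsilon$-chain; $X$ is cofinally Bourbaki quasi-complete if every such sequence has a cluster point. $X$ is strongly uniformly locally bounded if there is $\delta>0$ such that $S^\infty_d(x,\delta)$ is bounded for all $x\in X$. A function $f:X\to\mathbb{R}$ is strongly uniformly locally Lipschitz (uniformly locally chain-Lipschitz) if there is $\delta>0$ such that for each $x\in X$ the restriction of $f$ to $S^\infty_d(x,\delta)$ is Lipschitz (constant may depend on $x$). *)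

theory Defs
  imports "HOL-Analysis.Analysis"
begin

definition eps_chain :: "real \<Rightarrow> 'a::metric_space \<Rightarrow> 'a \<Rightarrow> bool" where
  "eps_chain e x y \<longleftrightarrow>
     (\<exists>(n::nat) (c::nat \<Rightarrow> 'a). c 0 = x \<and> c n = y \<and> (\<forall>i\<in>{1..n}. dist (c (i - 1)) (c i) < e))"

definition chain_ball :: "'a::metric_space \<Rightarrow> real \<Rightarrow> 'a set" where
  "chain_ball x e = {y. eps_chain e x y}"

definition cofinally_bourbaki_quasi_cauchy :: "(nat \<Rightarrow> 'a::metric_space) \<Rightarrow> bool" where
  "cofinally_bourbaki_quasi_cauchy s \<longleftrightarrow>
     (\<forall>e>0. \<exists>N::nat set. infinite N \<and> (\<forall>j\<in>N. \<forall>k\<in>N. eps_chain e (s j) (s k)))"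

definition cluster_point_seq :: "(nat \<Rightarrow> 'a::metric_space) \<Rightarrow> 'a \<Rightarrow> bool" where
  "cluster_point_seq s p \<longleftrightarrow> (\<forall>e>0. infinite {n. dist (s n) p < e})"

definition cofinally_bourbaki_quasi_complete :: "'a::metric_space itself \<Rightarrow> bool" where
  "cofinally_bourbaki_quasi_complete TYPE('a) \<longleftrightarrow>
     (\<forall>s::nat \<Rightarrow> 'a. cofinally_bourbaki_quasi_cauchy s \<longrightarrow> (\<exists>p. cluster_point_seq s p))"

definition strongly_uniformly_locally_bounded :: "'a::metric_space itself \<Rightarrow> bool" where
  "strongly_uniformly_locally_bounded TYPE('a) \<longleftrightarrow>
     (\<exists>\<delta>>0. \<forall>x::'a. bounded (chain_ball x \<delta>))"

definition strongly_uniformly_locally_lipschitz :: "('a::metric_space \<Rightarrow> real) \<Rightarrow> bool" where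
  "strongly_uniformly_locally_lipschitz f \<longleftrightarrow>
     (\<exists>\<delta>>0. \<forall>x. \<exists>K. K-lipschitz_on (chain_ball x \<delta>) f)"

end

theory Submission
  imports Defs
begin

text \<open>
  If X is cofinally Bourbaki quasi-complete, then for sets A_i such that every point has a
  neighbourhood meeting only finitely many of them, a single radius \<delta> makes every
  \<delta>-chain ball miss some A_i: otherwise picking points of A_i from ever finer chain balls
  produces a cofinally Bourbaki quasi-Cauchy sequence without cluster point. With A_i the
  complement of a ball of radius i this gives strong uniform local boundedness; with
  A_i = {|f| < 1/(i+1)} it bounds |f| away from 0 on every \<delta>-chain ball, where 1/f is
  therefore Lipschitz.

  Conversely, a cofinally Bourbaki quasi-Cauchy sequence s without cluster point yields a
  positive 1-Lipschitz f with f(s_n) \<le> 1/(n+1). Then 1/f is unbounded on a single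
  \<delta>-chain ball containing infinitely many s_n, whereas a function that is Lipschitz on a
  bounded set is bounded there.
\<close>

lemma eps_chain_iff_rtranclp: "eps_chain e x y \<longleftrightarrow> (\<lambda>u v. dist u v < e)\<^sup>*\<^sup>* x y"
proof -
  have steps: "(\<forall>i\<in>{1..n}. dist (c (i - 1)) (c i) < e) \<longleftrightarrow> (\<forall>i<n. dist (c i) (c (Suc i)) < e)"
    for n and c :: "nat \<Rightarrow> 'a"
    by (metis Suc_le_eq atLeastAtMost_iff diff_Suc_1 le_add1 not0_implies_Suc not_one_le_zero plus_1_eq_Suc)
  show ?thesis unfolding eps_chain_def rtranclp_power relpowp_fun_conv steps by blast
qed

lemma equivp_eps_chain: "equivp (eps_chain e)"
proof -
  have "symp (\<lambda>u v :: 'a. dist u v < e)" by (simp add: symp_def dist_commute)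
  then show ?thesis unfolding eps_chain_iff_rtranclp[abs_def] by (rule equivp_rtranclp)
qed

lemma eps_chain_if_in_chain_ball: "y \<in> chain_ball x e \<Longrightarrow> z \<in> chain_ball x e \<Longrightarrow> eps_chain e y z"
  using equivp_eps_chain unfolding chain_ball_def by (blast dest: equivp_symp intro: equivp_transp)

lemma ball_subset_chain_ball: "ball x e \<subseteq> chain_ball x e"
  by (auto simp: chain_ball_def eps_chain_iff_rtranclp)

lemma chain_ball_mono: "e \<le> e' \<Longrightarrow> chain_ball x e \<subseteq> chain_ball x e'"
  unfolding chain_ball_def eps_chain_iff_rtranclp
  by (auto elim: rtranclp_mono[THEN predicate2D, rotated])

lemma cofinally_bourbaki_quasi_cauchyI:
  assumes "\<And>e. e > 0 \<Longrightarrow> \<exists>x. infinite {i. s i \<in> chain_ball x e}"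
  shows "cofinally_bourbaki_quasi_cauchy s"
  unfolding cofinally_bourbaki_quasi_cauchy_def
  using assms by (fastforce intro: eps_chain_if_in_chain_ball)

lemma lipschitz_on_UNIV_imp_strongly_uniformly_locally_lipschitz:
  "K-lipschitz_on UNIV f \<Longrightarrow> strongly_uniformly_locally_lipschitz f"
  unfolding strongly_uniformly_locally_lipschitz_def
  by (meson lipschitz_on_subset subset_UNIV zero_less_one)

lemma strongly_uniformly_locally_lipschitz_imp_isCont:
  assumes "strongly_uniformly_locally_lipschitz f"
  shows "isCont f x"
proof -
  obtain \<delta> K where "\<delta> > 0" and "K-lipschitz_on (chain_ball x \<delta>) f"
    using assms unfolding strongly_uniformly_locally_lipschitz_def by blast
  have "K-lipschitz_on (ball x \<delta>) f"
    using \<open>K-lipschitz_on (chain_ball x \<delta>) f\<close> ball_subset_chain_ball by (rule lipschitz_on_subset)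
  then have "continuous_on (ball x \<delta>) f" by (rule lipschitz_on_continuous_on)
  then show "isCont f x" using \<open>\<delta> > 0\<close> by (simp add: continuous_on_eq_continuous_at)
qed

lemma isCont_nonzero_ball_avoids_small_values:
  fixes f :: "'a::metric_space \<Rightarrow> real"
  assumes "isCont f p" and "f p \<noteq> 0"
  shows "\<exists>e>0. \<exists>M. \<forall>i\<ge>M. ball p e \<inter> {y. \<bar>f y\<bar> < inverse (Suc i)} = {}"
proof -
  obtain e where "e > 0" and e: "\<And>y. dist y p < e \<Longrightarrow> dist (f y) (f p) < \<bar>f p\<bar> / 2"
    using assms unfolding continuous_at_eps_delta by (metis half_gt_zero zero_less_abs_iff)
  obtain M where M: "inverse (Suc M) < \<bar>f p\<bar> / 2"
    using reals_Archimedean[of "\<bar>f p\<bar> / 2"] assms(2) by auto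
  have "inverse (Suc i) \<le> \<bar>f y\<bar>" if "M \<le> i" and "y \<in> ball p e" for i y
  proof -
    have "inverse (real (Suc i)) \<le> inverse (Suc M)" using \<open>M \<le> i\<close> by (simp add: le_imp_inverse_le)
    moreover have "dist (f y) (f p) < \<bar>f p\<bar> / 2" using e \<open>y \<in> ball p e\<close> by (metis dist_commute mem_ball)
    then have "\<bar>f p\<bar> / 2 < \<bar>f y\<bar>" unfolding dist_real_def by arith
    ultimately show ?thesis using M by linarith
  qed
  with \<open>e > 0\<close> show ?thesis by (fastforce simp: not_less)
qed

lemma bounded_image_if_lipschitz_on:
  assumes "K-lipschitz_on S f" and "bounded S"
  shows "bounded (f ` S)"
proof (cases "S = {}")
  case False
  then obtain a where "a \<in> S" by blast
  then obtain B where B: "\<And>y. y \<in> S \<Longrightarrow> dist a y \<le> B"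
    using \<open>bounded S\<close> unfolding bounded_any_center[of _ a] by blast
  have "dist (f a) (f y) \<le> K * B" if "y \<in> S" for y
    using lipschitz_onD[OF assms(1) \<open>a \<in> S\<close> that] B[OF that] lipschitz_on_nonneg[OF assms(1)]
    by (meson mult_left_mono order_trans)
  then show ?thesis unfolding bounded_def by blast
qed simp

lemma lipschitz_on_reciprocal:
  fixes f :: "'a::metric_space \<Rightarrow> real"
  assumes lip: "K-lipschitz_on S f" and "m > 0" and lower: "\<And>y. y \<in> S \<Longrightarrow> m \<le> \<bar>f y\<bar>"
  shows "(K / m\<^sup>2)-lipschitz_on S (\<lambda>x. 1 / f x)"
proof (rule lipschitz_onI)
  show "0 \<le> K / m\<^sup>2" using lipschitz_on_nonneg[OF lip] by simp
  fix x y assume "x \<in> S" "y \<in> S"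
  have "m\<^sup>2 \<le> \<bar>f x\<bar> * \<bar>f y\<bar>"
    unfolding power2_eq_square using lower \<open>x \<in> S\<close> \<open>y \<in> S\<close> \<open>m > 0\<close> by (simp add: mult_mono)
  have "f x \<noteq> 0" "f y \<noteq> 0" using lower \<open>x \<in> S\<close> \<open>y \<in> S\<close> \<open>m > 0\<close> by fastforce+
  then have "dist (1 / f x) (1 / f y) = dist (f x) (f y) / (\<bar>f x\<bar> * \<bar>f y\<bar>)"
    by (simp add: dist_real_def field_simps abs_mult[symmetric] abs_minus_commute)
  also have "\<dots> \<le> dist (f x) (f y) / m\<^sup>2"
    using \<open>m\<^sup>2 \<le> \<bar>f x\<bar> * \<bar>f y\<bar>\<close> \<open>m > 0\<close> by (simp add: frac_le)
  also have "\<dots> \<le> K * dist x y / m\<^sup>2"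
    using lipschitz_onD[OF lip \<open>x \<in> S\<close> \<open>y \<in> S\<close>] by (simp add: divide_right_mono)
  finally show "dist (1 / f x) (1 / f y) \<le> K / m\<^sup>2 * dist x y" by simp
qed

lemma cofinally_bourbaki_quasi_complete_chain_balls_avoid:
  fixes A :: "nat \<Rightarrow> 'a::metric_space set"
  assumes cbqc: "cofinally_bourbaki_quasi_complete TYPE('a)"
    and locally_avoid: "\<And>p. \<exists>e>0. \<exists>M. \<forall>i\<ge>M. ball p e \<inter> A i = {}"
  shows "\<exists>\<delta>>0. \<forall>x. \<exists>i. chain_ball x \<delta> \<inter> A i = {}"
proof (rule ccontr)
  assume contra: "\<not> ?thesis"
  have "\<exists>x. \<forall>i. chain_ball x (inverse (Suc n)) \<inter> A i \<noteq> {}" for n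
  proof -
    have "inverse (real (Suc n)) > 0" by simp
    with contra show ?thesis by blast
  qed
  then obtain X where X: "\<And>n i. chain_ball (X n) (inverse (Suc n)) \<inter> A i \<noteq> {}"
    by metis
  \<comment> \<open>Reading each index i as a pair (n, k), column n supplies infinitely many terms of s
    inside one 1/(n+1)-chain ball, while the term with index i lies in A i.\<close>
  let ?n = "\<lambda>i. fst (prod_decode i)"
  have "\<exists>y. y \<in> chain_ball (X (?n i)) (inverse (Suc (?n i))) \<inter> A i" for i
    using X by blast
  then obtain s where s: "\<And>i. s i \<in> chain_ball (X (?n i)) (inverse (Suc (?n i)))"
    and sA: "\<And>i. s i \<in> A i"
    by (metis IntE)
  have "cofinally_bourbaki_quasi_cauchy s"
  proof (rule cofinally_bourbaki_quasi_cauchyI)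
    fix e :: real assume "e > 0"
    then obtain n where "inverse (Suc n) < e" using reals_Archimedean by blast
    then have "s (prod_encode (n, k)) \<in> chain_ball (X n) e" for k
      using s[of "prod_encode (n, k)"] chain_ball_mono[of "inverse (Suc n)" e] by auto
    then have "range (\<lambda>k. prod_encode (n, k)) \<subseteq> {i. s i \<in> chain_ball (X n) e}" by blast
    moreover have "infinite (range (\<lambda>k. prod_encode (n, k)))"
      by (rule range_inj_infinite) (simp add: inj_on_def prod_encode_eq)
    ultimately show "\<exists>x. infinite {i. s i \<in> chain_ball x e}" by (meson infinite_super)
  qed
  then obtain p where "cluster_point_seq s p"
    using cbqc unfolding cofinally_bourbaki_quasi_complete_def by blast
  moreover obtain e M where "e > 0" and M: "\<forall>i\<ge>M. ball p e \<inter> A i = {}"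
    using locally_avoid by blast
  have "i < M" if "dist (s i) p < e" for i
  proof (rule ccontr)
    assume "\<not> i < M"
    with M have "ball p e \<inter> A i = {}" by simp
    with sA[of i] that show False by (auto simp: dist_commute)
  qed
  then have "{i. dist (s i) p < e} \<subseteq> {..<M}" by blast
  then have "finite {i. dist (s i) p < e}" by (rule finite_subset) simp
  ultimately show False using \<open>e > 0\<close> unfolding cluster_point_seq_def by blast
qed

lemma cofinally_bourbaki_quasi_complete_imp_strongly_uniformly_locally_bounded:
  assumes cbqc: "cofinally_bourbaki_quasi_complete TYPE('a::metric_space)"
  shows "strongly_uniformly_locally_bounded TYPE('a)"
proof -
  fix a :: 'a
  have "\<exists>e>0. \<exists>M. \<forall>i\<ge>M. ball p e \<inter> - cball a (real i) = {}" for p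
  proof -
    obtain M :: nat where M: "dist a p + 1 \<le> M" using real_arch_simple by blast
    have "ball p 1 \<subseteq> cball a (real i)" if "M \<le> i" for i
    proof
      fix y assume "y \<in> ball p 1"
      then have "dist a y < dist a p + 1" using dist_triangle[of a y p] by simp
      with M that show "y \<in> cball a (real i)" by simp
    qed
    then show ?thesis using zero_less_one by blast
  qed
  then obtain \<delta> where "\<delta> > 0" and avoid: "\<And>x. \<exists>i. chain_ball x \<delta> \<inter> - cball a (real i) = {}"
    using cofinally_bourbaki_quasi_complete_chain_balls_avoid[OF cbqc] by meson
  have "bounded (chain_ball x \<delta>)" for x :: 'a
  proof -
    obtain i where "chain_ball x \<delta> \<subseteq> cball a (real i)" using avoid[of x] by blast
    then show ?thesis by (rule bounded_subset[OF bounded_cball])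
  qed
  then show ?thesis
    unfolding strongly_uniformly_locally_bounded_def using \<open>\<delta> > 0\<close> by blast
qed

lemma cofinally_bourbaki_quasi_complete_imp_reciprocal_strongly_uniformly_locally_lipschitz:
  fixes f :: "'a::metric_space \<Rightarrow> real"
  assumes cbqc: "cofinally_bourbaki_quasi_complete TYPE('a)"
    and nonzero: "\<And>x. f x \<noteq> 0" and sull: "strongly_uniformly_locally_lipschitz f"
  shows "strongly_uniformly_locally_lipschitz (\<lambda>x. 1 / f x)"
proof -
  define A where "A i = {y. \<bar>f y\<bar> < inverse (Suc i)}" for i
  have "\<exists>e>0. \<exists>M. \<forall>i\<ge>M. ball p e \<inter> A i = {}" for p
    unfolding A_def using strongly_uniformly_locally_lipschitz_imp_isCont[OF sull] nonzero
    by (rule isCont_nonzero_ball_avoids_small_values)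
  then obtain \<delta>1 where "\<delta>1 > 0" and avoid: "\<And>x. \<exists>i. chain_ball x \<delta>1 \<inter> A i = {}"
    using cofinally_bourbaki_quasi_complete_chain_balls_avoid[OF cbqc] by meson
  obtain \<delta>0 where "\<delta>0 > 0" and lip: "\<And>x. \<exists>K. K-lipschitz_on (chain_ball x \<delta>0) f"
    using sull unfolding strongly_uniformly_locally_lipschitz_def by blast
  define \<delta> where "\<delta> = min \<delta>0 \<delta>1"
  have "\<exists>K. K-lipschitz_on (chain_ball x \<delta>) (\<lambda>x. 1 / f x)" for x
  proof -
    obtain K where "K-lipschitz_on (chain_ball x \<delta>0) f" using lip by blast
    then have "K-lipschitz_on (chain_ball x \<delta>) f"
      by (rule lipschitz_on_subset) (simp add: \<delta>_def chain_ball_mono)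
    obtain i where "chain_ball x \<delta>1 \<inter> A i = {}" using avoid by blast
    moreover have "chain_ball x \<delta> \<subseteq> chain_ball x \<delta>1" by (simp add: \<delta>_def chain_ball_mono)
    ultimately have "inverse (Suc i) \<le> \<bar>f y\<bar>" if "y \<in> chain_ball x \<delta>" for y
      using that by (auto simp: A_def not_less)
    then show ?thesis
      using lipschitz_on_reciprocal[OF \<open>K-lipschitz_on (chain_ball x \<delta>) f\<close>, of "inverse (Suc i)"] by auto
  qed
  moreover have "\<delta> > 0" using \<open>\<delta>0 > 0\<close> \<open>\<delta>1 > 0\<close> by (simp add: \<delta>_def)
  ultimately show ?thesis unfolding strongly_uniformly_locally_lipschitz_def by blast
qed

lemma cluster_point_seq_if_in_closure_graph:
  fixes s :: "nat \<Rightarrow> 'a::metric_space"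
  assumes "(x, 0) \<in> closure (range (\<lambda>n. (s n, inverse (real (Suc n)))))"
  shows "cluster_point_seq s x"
  unfolding cluster_point_seq_def
proof (intro allI impI)
  fix e :: real assume "e > 0"
  have "\<exists>n\<ge>m. dist (s n) x < e" for m
  proof -
    have "min e (inverse (Suc m)) > 0" using \<open>e > 0\<close> by simp
    then obtain n where close: "dist (s n, inverse (real (Suc n))) (x, 0) < min e (inverse (Suc m))"
      using assms unfolding closure_approachable by blast
    have "dist (s n) x < e"
      using close dist_fst_le[of "(s n, inverse (real (Suc n)))" "(x, 0)"] by simp
    moreover have "inverse (real (Suc n)) \<le> dist (s n, inverse (real (Suc n))) (x, 0)"
      using dist_snd_le[of "(s n, inverse (real (Suc n)))" "(x, 0)"] by (simp add: dist_real_def)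
    then have "inverse (real (Suc n)) < inverse (real (Suc m))"
      using close by (rule order.strict_trans1[OF _ less_le_trans]) simp
    then have "m \<le> n" by simp
    ultimately show ?thesis by blast
  qed
  then show "infinite {n. dist (s n) x < e}"
    by (simp add: infinite_nat_iff_unbounded_le)
qed

lemma lipschitz_positive_vanishing_along_sequence:
  fixes s :: "nat \<Rightarrow> 'a::metric_space"
  assumes "\<nexists>p. cluster_point_seq s p"
  obtains f :: "'a \<Rightarrow> real"
  where "1-lipschitz_on UNIV f" and "\<And>x. f x > 0" and "\<And>n. f (s n) \<le> inverse (Suc n)"
proof
  \<comment> \<open>f x = 0 forces terms s n close to x with 1/(n+1) small, i.e. with n large;
    so f vanishes only at cluster points of s.\<close>
  define G where "G = range (\<lambda>n. (s n, inverse (real (Suc n))))"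
  define f where "f x = infdist (x, 0::real) G" for x
  show "1-lipschitz_on UNIV f"
  proof (rule lipschitz_onI)
    fix x y :: 'a
    have "dist (f x) (f y) \<le> dist (x, 0::real) (y, 0)"
      unfolding f_def dist_real_def by (rule infdist_triangle_abs)
    then show "dist (f x) (f y) \<le> 1 * dist x y" by (simp add: dist_Pair_Pair)
  qed simp
  show "f (s n) \<le> inverse (Suc n)" for n
  proof -
    have "f (s n) \<le> dist (s n, 0::real) (s n, inverse (real (Suc n)))"
      unfolding f_def G_def by (rule infdist_le) simp
    then show ?thesis by (simp add: dist_Pair_Pair dist_real_def)
  qed
  show "f x > 0" for x
  proof -
    have "f x \<noteq> 0"
      using assms cluster_point_seq_if_in_closure_graph[of x s] in_closure_iff_infdist_zero[of G]
      by (auto simp: f_def G_def)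
    then show ?thesis by (simp add: f_def order_less_le infdist_nonneg)
  qed
qed

lemma bounded_image_chain_balls_if_strongly_uniformly_locally_lipschitz:
  fixes g :: "'a::metric_space \<Rightarrow> real"
  assumes "strongly_uniformly_locally_bounded TYPE('a)" and "strongly_uniformly_locally_lipschitz g"
  shows "\<exists>\<delta>>0. \<forall>x. bounded (g ` chain_ball x \<delta>)"
proof -
  obtain \<delta>b where "\<delta>b > 0" and bdd: "\<And>x::'a. bounded (chain_ball x \<delta>b)"
    using assms(1) unfolding strongly_uniformly_locally_bounded_def by blast
  obtain \<delta>l where "\<delta>l > 0" and lip: "\<And>x. \<exists>K. K-lipschitz_on (chain_ball x \<delta>l) g"
    using assms(2) unfolding strongly_uniformly_locally_lipschitz_def by blast
  define \<delta> where "\<delta> = min \<delta>b \<delta>l"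
  have "bounded (g ` chain_ball x \<delta>)" for x
  proof -
    obtain K where "K-lipschitz_on (chain_ball x \<delta>l) g" using lip by blast
    then have "K-lipschitz_on (chain_ball x \<delta>) g"
      by (rule lipschitz_on_subset) (simp add: \<delta>_def chain_ball_mono)
    moreover have "bounded (chain_ball x \<delta>)"
      using bdd[of x] by (rule bounded_subset) (simp add: \<delta>_def chain_ball_mono)
    ultimately show ?thesis by (rule bounded_image_if_lipschitz_on)
  qed
  moreover have "\<delta> > 0" using \<open>\<delta>b > 0\<close> \<open>\<delta>l > 0\<close> by (simp add: \<delta>_def)
  ultimately show ?thesis by blast
qed

lemma cofinally_bourbaki_quasi_complete_if_reciprocals_of_lipschitz:
  assumes sulb: "strongly_uniformly_locally_bounded TYPE('a::metric_space)"
    and reciprocal: "\<And>f::'a \<Rightarrow> real. (\<forall>x. f x \<noteq> 0) \<Longrightarrow> (\<exists>K. K-lipschitz_on UNIV f)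
                      \<Longrightarrow> strongly_uniformly_locally_lipschitz (\<lambda>x. 1 / f x)"
  shows "cofinally_bourbaki_quasi_complete TYPE('a)"
  unfolding cofinally_bourbaki_quasi_complete_def
proof (intro allI impI)
  fix s :: "nat \<Rightarrow> 'a" assume "cofinally_bourbaki_quasi_cauchy s"
  show "\<exists>p. cluster_point_seq s p"
  proof (rule ccontr)
    assume no_cluster: "\<nexists>p. cluster_point_seq s p"
    obtain f :: "'a \<Rightarrow> real" where "1-lipschitz_on UNIV f" and pos: "\<And>x. f x > 0"
      and small: "\<And>n. f (s n) \<le> inverse (Suc n)"
      using lipschitz_positive_vanishing_along_sequence[OF no_cluster] by blast
    then have "strongly_uniformly_locally_lipschitz (\<lambda>x. 1 / f x)"
      by (intro reciprocal) (auto simp: less_le)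
    then obtain \<delta> where "\<delta> > 0" and bdd: "\<And>x. bounded ((\<lambda>x. 1 / f x) ` chain_ball x \<delta>)"
      using bounded_image_chain_balls_if_strongly_uniformly_locally_lipschitz[OF sulb] by blast
    obtain N where "infinite N" and chain: "\<forall>j\<in>N. \<forall>k\<in>N. eps_chain \<delta> (s j) (s k)"
      using \<open>cofinally_bourbaki_quasi_cauchy s\<close> \<open>\<delta> > 0\<close>
      unfolding cofinally_bourbaki_quasi_cauchy_def by blast
    then obtain j0 where "j0 \<in> N" by (metis finite.emptyI ex_in_conv)
    obtain B where B: "\<And>y. y \<in> chain_ball (s j0) \<delta> \<Longrightarrow> \<bar>1 / f y\<bar> \<le> B"
      using bdd[of "s j0"] unfolding bounded_real by blast
    obtain M :: nat where "B < M" using reals_Archimedean2 by blast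
    obtain j where "j \<in> N" and "M \<le> j" using \<open>infinite N\<close> infinite_nat_iff_unbounded_le by blast
    have "s j \<in> chain_ball (s j0) \<delta>"
      using chain \<open>j0 \<in> N\<close> \<open>j \<in> N\<close> by (simp add: chain_ball_def)
    then have "1 / f (s j) \<le> B" using B abs_le_D1 by blast
    moreover have "real (Suc j) \<le> 1 / f (s j)"
      using le_imp_inverse_le[OF small[of j] pos[of "s j"]] by (simp add: inverse_eq_divide)
    moreover have "real M \<le> real j" using \<open>M \<le> j\<close> by simp
    ultimately show False using \<open>B < M\<close> by simp
  qed
qed

theorem mainTheorem4:
  shows "(cofinally_bourbaki_quasi_complete TYPE('a::metric_space)
           \<longleftrightarrow> (strongly_uniformly_locally_bounded TYPE('a)
                \<and> (\<forall>f::'a \<Rightarrow> real. (\<forall>x. f x \<noteq> 0) \<and> strongly_uniformly_locally_lipschitz f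
                      \<longrightarrow> strongly_uniformly_locally_lipschitz (\<lambda>x. 1 / f x))))
       \<and> (cofinally_bourbaki_quasi_complete TYPE('a)
           \<longleftrightarrow> (strongly_uniformly_locally_bounded TYPE('a)
                \<and> (\<forall>f::'a \<Rightarrow> real. (\<forall>x. f x \<noteq> 0) \<and> (\<exists>K. K-lipschitz_on UNIV f)
                      \<longrightarrow> strongly_uniformly_locally_lipschitz (\<lambda>x. 1 / f x))))"
proof -
  let ?cbqc = "cofinally_bourbaki_quasi_complete TYPE('a)"
  let ?sulb = "strongly_uniformly_locally_bounded TYPE('a)"
  let ?reciprocal_sull = "\<forall>f::'a \<Rightarrow> real. (\<forall>x. f x \<noteq> 0) \<and> strongly_uniformly_locally_lipschitz f
                      \<longrightarrow> strongly_uniformly_locally_lipschitz (\<lambda>x. 1 / f x)"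
  let ?reciprocal_lipschitz = "\<forall>f::'a \<Rightarrow> real. (\<forall>x. f x \<noteq> 0) \<and> (\<exists>K. K-lipschitz_on UNIV f)
                      \<longrightarrow> strongly_uniformly_locally_lipschitz (\<lambda>x. 1 / f x)"
  have "?cbqc \<Longrightarrow> ?sulb \<and> ?reciprocal_sull"
    using cofinally_bourbaki_quasi_complete_imp_strongly_uniformly_locally_bounded
      cofinally_bourbaki_quasi_complete_imp_reciprocal_strongly_uniformly_locally_lipschitz
    by blast
  moreover have "?reciprocal_sull \<Longrightarrow> ?reciprocal_lipschitz"
    using lipschitz_on_UNIV_imp_strongly_uniformly_locally_lipschitz by blast
  moreover have "?sulb \<and> ?reciprocal_lipschitz \<Longrightarrow> ?cbqc"
    using cofinally_bourbaki_quasi_complete_if_reciprocals_of_lipschitz by blast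
  ultimately show ?thesis by blast
qed

end
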